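(* Let $\theta=\sqrt{b/a}$ with $a<b$ coprime positive integers not both perfect squares, and let $\Xi(\theta)>0$ be a constant such that $|u/v-\theta|\ge\Xi(\theta)/v^2$ for all $u\in\mathbb{Z}$, $v\in\mathbb{N}_{\ge1}$. Then for every $\varepsilon>\Xi(\theta)$ and all $B$ sufficiently large in terms of $\varepsilon$, $$\delta_{\theta,B,1/2}(\chi_\varepsilon)\le6\sum_{\substack{m\in\mathbb{Z}\setminus\{0\}\\|m|\le2\varepsilon\sqrt{ab}+1}}\tau(A'|m|)\left(\left\lfloor\frac{\log\varepsilon-\log\Xi(\theta)}{2\log\varepsilon^*_{A'B'}}\right\rfloor+1\right).$$
   Context: On $\mathbb{P}^1(\mathbb{Q})$ use $H([u:v])=\max(|u|,|v|)$ with $u,v$ coprime integers; $\delta_{\theta,B,r}(f)=\sum_{[u:v]\in\mathbb{P}^1(\mathbb{Q}),v\ne0,H([u:v])\le B}f(B^{1/r}(u/v-\theta))$, and $\chi_\varepsilon$ is the indicator of $\{t\in\mathbb{R}:|t|\le\varepsilon\}$. Write $a=A'a'^2$, $b=B'b'^2$ with $A',B'$ squarefree positive integers (so $A'B'$ is squarefree). For a squarefree integer $D>1$, $\varepsilon^*_D>1$ denotes the element of $\{z\in\mathbb{Z}+\mathbb{Z}\sqrt D: z\bar z=1\}$ whose class generates this group modulo $\{\pm1\}$ (where $\overline{x+y\sqrt D}=x-y\sqrt D$). $\tau(n)$ is the number of positive divisors of $n$. *)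

theory Defs
  imports "HOL-Analysis.Analysis" "HOL-Computational_Algebra.Squarefree"
begin

text \<open>Points [u:v] of P^1(Q) with v nonzero are represented uniquely by coprime
  integers u, v with v >= 1; their height is max |u| |v|.\<close>
definition delta :: "real \<Rightarrow> real \<Rightarrow> real \<Rightarrow> (real \<Rightarrow> real) \<Rightarrow> real" where
  "delta \<theta> B r f =
     (\<Sum>(u,v)\<in>{(u::int, v::int). v \<ge> 1 \<and> coprime u v \<and> real_of_int (max \<bar>u\<bar> \<bar>v\<bar>) \<le> B}.
        f (B powr (1 / r) * (real_of_int u / real_of_int v - \<theta>)))"

definition chi :: "real \<Rightarrow> real \<Rightarrow> real" where
  "chi \<epsilon> t = (if \<bar>t\<bar> \<le> \<epsilon> then 1 else 0)"

text \<open>Norm-one elements z = x + y sqrt D of Z[sqrt D], viewed as reals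
  (for D > 1 squarefree the representation is unique, and z * conj z = x^2 - D y^2).\<close>
definition norm_one :: "int \<Rightarrow> real set" where
  "norm_one D = {real_of_int x + real_of_int y * sqrt (real_of_int D) | x y :: int. x^2 - D * y^2 = 1}"

definition fund_unit :: "int \<Rightarrow> real" where
  "fund_unit D = (THE e. e > 1 \<and> e \<in> norm_one D \<and>
      (\<forall>z\<in>norm_one D. \<exists>k::int. z = e powi k \<or> z = - (e powi k)))"

definition num_divisors :: "nat \<Rightarrow> nat" where
  "num_divisors n = card {d::nat. d dvd n}"

end

theory Submission
  imports Defs "HOL-Computational_Algebra.Nth_Powers"
begin

text \<open>
  For large \<open>B\<close> every point \<open>[u:v]\<close> counted on the left satisfies \<open>\<bar>u - \<theta> v\<bar> \<le> \<epsilon> / B\<close>.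
  For two distinct such points the integer \<open>a \<Delta>u\<^sup>2 - b \<Delta>v\<^sup>2\<close> is nonzero, as \<open>\<theta> = sqrt (b / a)\<close>
  is irrational, and it factors as \<open>a (\<Delta>u - \<theta> \<Delta>v) (\<Delta>u + \<theta> \<Delta>v)\<close>; hence
  \<open>\<bar>\<Delta>v\<bar> \<ge> B / (8 \<epsilon> sqrt (a b))\<close>, and denominators \<open>v \<le> B\<close> leave room for at most
  \<open>8 \<epsilon> sqrt (a b) + 1\<close> points. On the right every summand is at least 1 as soon as the
  fundamental unit \<open>\<epsilon>\<^sup>*\<^sub>A\<^sub>'\<^sub>B\<^sub>'\<close> exceeds 1. This rests on Pell's equation for the non-square
  \<open>D = A' B'\<close>: the infinitely many good approximations \<open>h / k\<close> of \<open>sqrt D\<close> have bounded norms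
  \<open>h\<^sup>2 - D k\<^sup>2\<close>, so two of them share norm and residues modulo it, and their quotient is a unit
  other than \<open>\<plusminus>1\<close>; the least unit above 1 then generates all units up to sign.
\<close>

section \<open>Units of norm one in \<open>\<int>[sqrt D]\<close>\<close>

lemma sqrt_nonsquare_coeffs_eq_0:
  fixes D :: nat and x y :: int
  assumes "\<not> is_square D" and "of_int x + of_int y * sqrt (real D) = 0"
  shows "x = 0 \<and> y = 0"
proof -
  have "y = 0"
  proof (rule ccontr)
    assume y: "y \<noteq> 0"
    have "real_of_int x = - of_int y * sqrt (real D)"
      using assms(2) by linarith
    then have "real_of_int (x^2) = real_of_int (int D * y^2)"
      by (simp add: power_mult_distrib)
    then have "int ((nat \<bar>x\<bar>)^2) = int (D * (nat \<bar>y\<bar>)^2)"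
      by (simp only: of_int_eq_iff) simp
    then have "is_square (D * (nat \<bar>y\<bar>)^2)"
      by (metis is_nth_power_nth_power of_nat_eq_iff)
    then have "is_square D"
      using is_nth_power_mult_cancel_right[of 2 "(nat \<bar>y\<bar>)^2" D] y by simp
    then show False using assms(1) by simp
  qed
  then show ?thesis using assms(2) by simp
qed

lemma sqrt_nonsquare_not_rat:
  fixes D :: nat
  assumes "\<not> is_square D"
  shows "sqrt (real D) \<notin> \<rat>"
proof
  assume "sqrt (real D) \<in> \<rat>"
  then obtain p q :: int where "q > 0" and "sqrt (real D) = of_int p / of_int q"
    by (elim Rats_cases')
  then have "of_int (-p) + of_int q * sqrt (real D) = 0" by simp
  with \<open>q > 0\<close> show False
    using sqrt_nonsquare_coeffs_eq_0[OF assms] by fastforce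
qed

lemma not_is_square_pos: "\<not> is_square (D :: nat) \<Longrightarrow> D > 0"
  by (metis gr0I is_nth_powerI power_zero_numeral)

lemma mem_norm_one_iff:
  "z \<in> norm_one (int D) \<longleftrightarrow>
     (\<exists>x y. x^2 - int D * y^2 = 1 \<and> z = of_int x + of_int y * sqrt (real D))"
  unfolding norm_one_def by auto

lemma norm_one_one: "1 \<in> norm_one (int D)"
  unfolding mem_norm_one_iff by (intro exI[of _ 1] exI[of _ 0]) simp

lemma norm_one_mult:
  assumes "z \<in> norm_one (int D)" "w \<in> norm_one (int D)"
  shows "z * w \<in> norm_one (int D)"
proof -
  obtain x y where xy: "x^2 - int D * y^2 = 1" "z = of_int x + of_int y * sqrt (real D)"
    using assms(1) unfolding mem_norm_one_iff by blast
  obtain x' y' where xy': "x'^2 - int D * y'^2 = 1" "w = of_int x' + of_int y' * sqrt (real D)"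
    using assms(2) unfolding mem_norm_one_iff by blast
  have "(x*x' + int D*y*y')^2 - int D * (x*y' + x'*y)^2 = (x^2 - int D * y^2) * (x'^2 - int D * y'^2)"
    by (simp add: power2_eq_square algebra_simps)
  then have "(x*x' + int D*y*y')^2 - int D * (x*y' + x'*y)^2 = 1"
    using xy xy' by simp
  moreover have "z * w = of_int (x*x' + int D*y*y') + of_int (x*y' + x'*y) * sqrt (real D)"
    unfolding xy xy' by (simp add: algebra_simps)
  ultimately show ?thesis unfolding mem_norm_one_iff by blast
qed

lemma norm_one_conj_eq_inverse:
  assumes "x^2 - int D * y^2 = 1"
  shows "inverse (of_int x + of_int y * sqrt (real D)) = of_int x - of_int y * sqrt (real D)"
proof (rule inverse_unique)
  have "(of_int x + of_int y * sqrt (real D)) * (of_int x - of_int y * sqrt (real D))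
      = real_of_int (x^2 - int D * y^2)"
    by (simp add: algebra_simps power2_eq_square)
  then show "(of_int x + of_int y * sqrt (real D)) * (of_int x - of_int y * sqrt (real D)) = 1"
    using assms by simp
qed

lemma norm_one_inverse:
  assumes "z \<in> norm_one (int D)"
  shows "inverse z \<in> norm_one (int D)"
proof -
  obtain x y where xy: "x^2 - int D * y^2 = 1" "z = of_int x + of_int y * sqrt (real D)"
    using assms unfolding mem_norm_one_iff by blast
  then have "inverse z = of_int x + of_int (-y) * sqrt (real D)"
    using norm_one_conj_eq_inverse by simp
  moreover have "x^2 - int D * (-y)^2 = 1" using xy by simp
  ultimately show ?thesis unfolding mem_norm_one_iff by blast
qed

lemma norm_one_uminus:
  assumes "z \<in> norm_one (int D)"
  shows "- z \<in> norm_one (int D)"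
proof -
  obtain x y where "x^2 - int D * y^2 = 1" "z = of_int x + of_int y * sqrt (real D)"
    using assms unfolding mem_norm_one_iff by blast
  then have "(-x)^2 - int D * (-y)^2 = 1" "- z = of_int (-x) + of_int (-y) * sqrt (real D)"
    by simp_all
  then show ?thesis unfolding mem_norm_one_iff by blast
qed

lemma norm_one_power:
  assumes "z \<in> norm_one (int D)"
  shows "z ^ n \<in> norm_one (int D)"
  by (induction n) (simp_all add: norm_one_one norm_one_mult assms)

lemma norm_one_power_int:
  assumes "z \<in> norm_one (int D)"
  shows "z powi k \<in> norm_one (int D)"
  unfolding power_int_def
  using norm_one_power[OF assms] norm_one_power[OF norm_one_inverse[OF assms]] by simp

lemma norm_one_gt_1_coeffs_pos:
  assumes "x^2 - int D * y^2 = 1" and "of_int x + of_int y * sqrt (real D) > 1"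
  shows "x > 0 \<and> y > 0"
proof -
  define z where "z = of_int x + of_int y * sqrt (real D)"
  define z' where "z' = of_int x - of_int y * sqrt (real D)"
  have "z' = inverse z"
    using norm_one_conj_eq_inverse[OF assms(1)] unfolding z_def z'_def by simp
  then have "0 < z'" "z' < 1" "1 < z"
    using assms(2) unfolding z_def by (simp_all add: inverse_less_1_iff)
  moreover have "2 * of_int x = z + z'" "2 * (of_int y * sqrt (real D)) = z - z'"
    unfolding z_def z'_def by simp_all
  ultimately have "real_of_int x > 0" "of_int y * sqrt (real D) > 0" by linarith+
  then show ?thesis by (simp add: zero_less_mult_iff)
qed

lemma approx_set_sqrt_norm_bound:
  fixes D :: nat and h k :: int
  assumes "\<not> is_square D" and "(h, k) \<in> approx_set (sqrt (real D))"
  shows "of_int h + of_int k * sqrt (real D) > 0"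
    and "h^2 - int D * k^2 \<noteq> 0"
    and "real_of_int \<bar>h^2 - int D * k^2\<bar> \<le> 2 * sqrt (real D) + 1"
proof -
  define r where "r = sqrt (real D)"
  have r1: "r \<ge> 1" using not_is_square_pos[OF assms(1)] unfolding r_def by simp
  from assms(2) have k: "k > 0" and approx: "\<bar>r - h/k\<bar> < 1/k^2"
    by (auto simp: approx_set_def r_def)
  have "\<bar>of_int h - of_int k * r\<bar> = of_int k * \<bar>r - h/k\<bar>"
    using k by (simp add: abs_mult_pos' field_simps)
  also have "\<dots> \<le> of_int k * (1/k^2)"
    using approx k by (intro mult_left_mono) auto
  also have "\<dots> = 1/k" using k by (simp add: power2_eq_square)
  finally have close: "\<bar>of_int h - of_int k * r\<bar> \<le> 1/k" .
  have inv_k: "1 / real_of_int k \<le> 1" using k by simp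
  have kr: "of_int k * r \<ge> 1" using mult_mono[of 1 "of_int k" 1 r] k r1 by simp
  show pos: "of_int h + of_int k * sqrt (real D) > 0"
    using close inv_k kr unfolding r_def by linarith
  have ne: "of_int h - of_int k * r \<noteq> 0"
  proof
    assume "of_int h - of_int k * r = 0"
    then have "of_int h + of_int (-k) * sqrt (real D) = 0" unfolding r_def by simp
    with k show False using sqrt_nonsquare_coeffs_eq_0[OF assms(1)] by fastforce
  qed
  have prod: "real_of_int (h^2 - int D * k^2) = (of_int h - of_int k * r) * (of_int h + of_int k * r)"
    unfolding r_def by (simp add: algebra_simps power2_eq_square)
  show "h^2 - int D * k^2 \<noteq> 0"
    using prod ne pos unfolding r_def by (metis mult_eq_0_iff of_int_0 order_less_irrefl)
  have "\<bar>of_int h + of_int k * r\<bar> \<le> 1/k + 2 * (of_int k * r)"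
    using close kr by linarith
  then have "\<bar>real_of_int (h^2 - int D * k^2)\<bar> \<le> (1/k) * (1/k + 2 * (of_int k * r))"
    unfolding prod abs_mult using k by (intro mult_mono close) auto
  also have "\<dots> = (1/k) * (1/k) + 2 * r" using k by (simp add: field_simps)
  also have "\<dots> \<le> 1 + 2 * r"
    using mult_le_one[of "1 / real_of_int k" "1 / real_of_int k"] inv_k k by simp
  finally show "real_of_int \<bar>h^2 - int D * k^2\<bar> \<le> 2 * sqrt (real D) + 1"
    unfolding r_def by simp
qed

lemma norm_one_quotient:
  fixes D :: nat and h1 k1 h2 k2 n :: int
  assumes n1: "h1^2 - int D * k1^2 = n" and n2: "h2^2 - int D * k2^2 = n" and "n \<noteq> 0"
    and "n dvd h1 - h2" and "n dvd k1 - k2"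
  shows "(of_int h1 + of_int k1 * sqrt (real D)) / (of_int h2 + of_int k2 * sqrt (real D))
           \<in> norm_one (int D)"
proof -
  define z1 where "z1 = of_int h1 + of_int k1 * sqrt (real D)"
  define z2 where "z2 = of_int h2 + of_int k2 * sqrt (real D)"
  define z2' where "z2' = of_int h2 - of_int k2 * sqrt (real D)"
  have "h1*h2 - int D*k1*k2 = h2*(h1-h2) - int D*k2*(k1-k2) + n"
    using n2 by (simp add: algebra_simps power2_eq_square)
  with assms(4,5) obtain X where X: "h1*h2 - int D*k1*k2 = n * X"
    by (metis dvd_add dvd_diff dvd_mult dvd_refl dvdE)
  have "h2*k1 - h1*k2 = h2*(k1-k2) - k2*(h1-h2)" by (simp add: algebra_simps)
  with assms(4,5) obtain Y where Y: "h2*k1 - h1*k2 = n * Y"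
    by (metis dvd_diff dvd_mult dvdE)
  have "n * n * (X^2 - int D * Y^2) = (h1*h2 - int D*k1*k2)^2 - int D*(h2*k1 - h1*k2)^2"
    unfolding X Y by (simp add: algebra_simps power2_eq_square)
  also have "\<dots> = (h1^2 - int D * k1^2) * (h2^2 - int D * k2^2)"
    by (simp add: power2_eq_square algebra_simps)
  finally have XY: "X^2 - int D * Y^2 = 1" using n1 n2 \<open>n \<noteq> 0\<close> by simp
  have "z1 * z2' = of_int (h1*h2 - int D*k1*k2) + of_int (h2*k1 - h1*k2) * sqrt (real D)"
    unfolding z1_def z2'_def by (simp add: algebra_simps)
  then have "z1 * z2' = of_int n * (of_int X + of_int Y * sqrt (real D))"
    unfolding X Y by (simp add: algebra_simps)
  moreover have "z2' * z2 = real_of_int (h2^2 - int D * k2^2)"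
    unfolding z2_def z2'_def by (simp add: algebra_simps power2_eq_square)
  then have z2: "z2' * z2 = of_int n" using n2 by simp
  ultimately have "of_int n * ((of_int X + of_int Y * sqrt (real D)) * z2) = of_int n * z1"
    by (metis mult.assoc mult.commute)
  then have "(of_int X + of_int Y * sqrt (real D)) * z2 = z1" using \<open>n \<noteq> 0\<close> by simp
  moreover have "z2 \<noteq> 0" using z2 \<open>n \<noteq> 0\<close> by auto
  ultimately have "z1 / z2 = of_int X + of_int Y * sqrt (real D)" by (auto simp: field_simps)
  with XY show ?thesis unfolding z1_def z2_def mem_norm_one_iff by blast
qed

lemma approx_set_sqrt_pigeonhole:
  fixes D :: nat
  assumes "\<not> is_square D"
  obtains h1 k1 h2 k2 n where "(h1, k1) \<in> approx_set (sqrt (real D))"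
    and "(h2, k2) \<in> approx_set (sqrt (real D))" and "(h1, k1) \<noteq> (h2, k2)"
    and "h1^2 - int D * k1^2 = n" and "h2^2 - int D * k2^2 = n" and "n \<noteq> 0"
    and "n dvd h1 - h2" and "n dvd k1 - k2"
proof -
  define r where "r = sqrt (real D)"
  define N where "N = (\<lambda>(h::int, k::int). h^2 - int D * k^2)"
  define C where "C = \<lceil>2 * r + 1\<rceil>"
  define f where "f = (\<lambda>p. (N p, fst p mod N p, snd p mod N p))"
  have "f (h, k) \<in> {-C..C} \<times> {-C..C} \<times> {-C..C}" if hk: "(h, k) \<in> approx_set r" for h k
  proof -
    have "real_of_int \<bar>N (h, k)\<bar> \<le> 2 * r + 1"
      using approx_set_sqrt_norm_bound(3)[OF assms] hk unfolding N_def r_def by simp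
    also have "\<dots> \<le> of_int C" unfolding C_def by (rule le_of_int_ceiling)
    finally have "\<bar>N (h, k)\<bar> \<le> C" by (simp only: of_int_le_iff)
    moreover have "N (h, k) \<noteq> 0"
      using approx_set_sqrt_norm_bound(2)[OF assms] hk unfolding N_def r_def by simp
    ultimately show ?thesis
      using abs_mod_less[of "N (h, k)" h] abs_mod_less[of "N (h, k)" k]
      unfolding f_def by (auto simp: abs_le_iff)
  qed
  then have "f ` approx_set r \<subseteq> {-C..C} \<times> {-C..C} \<times> {-C..C}"
    unfolding image_subset_iff by (metis surj_pair)
  then have "finite (f ` approx_set r)" by (rule finite_subset) simp
  moreover have "infinite (approx_set r)"
    using sqrt_nonsquare_not_rat[OF assms] rational_iff_finite_approx_set unfolding r_def by blast
  ultimately obtain p1 p2 where p: "p1 \<in> approx_set r" "p2 \<in> approx_set r" "p1 \<noteq> p2" "f p1 = f p2"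
    using finite_imageD unfolding inj_on_def by blast
  obtain h1 k1 h2 k2 where hk: "p1 = (h1, k1)" "p2 = (h2, k2)" by fastforce
  have "N p2 = N p1" "N p1 \<noteq> 0" "h1 mod N p1 = h2 mod N p1" "k1 mod N p1 = k2 mod N p1"
    using p approx_set_sqrt_norm_bound(2)[OF assms] unfolding f_def hk N_def r_def by auto
  then show thesis
    using that[of h1 k1 h2 k2 "N p1"] p unfolding hk r_def by (auto simp: N_def mod_eq_dvd_iff)
qed

lemma norm_one_gt_1_exists:
  fixes D :: nat
  assumes "\<not> is_square D"
  shows "\<exists>z\<in>norm_one (int D). z > 1"
proof -
  obtain h1 k1 h2 k2 n where p: "(h1, k1) \<in> approx_set (sqrt (real D))"
    "(h2, k2) \<in> approx_set (sqrt (real D))" "(h1, k1) \<noteq> (h2, k2)"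
    and n: "h1^2 - int D * k1^2 = n" "h2^2 - int D * k2^2 = n" "n \<noteq> 0"
    "n dvd h1 - h2" "n dvd k1 - k2"
    using approx_set_sqrt_pigeonhole[OF assms] .
  define w where "w = (of_int h1 + of_int k1 * sqrt (real D)) / (of_int h2 + of_int k2 * sqrt (real D))"
  have "w \<in> norm_one (int D)" unfolding w_def using norm_one_quotient[OF n] .
  moreover have "w > 0"
    using p approx_set_sqrt_norm_bound(1)[OF assms] unfolding w_def by simp
  moreover have "w \<noteq> 1"
  proof
    assume "w = 1"
    then have "of_int (h1 - h2) + of_int (k1 - k2) * sqrt (real D) = 0"
      using p approx_set_sqrt_norm_bound(1)[OF assms] unfolding w_def by (simp add: algebra_simps)
    then show False using p(3) sqrt_nonsquare_coeffs_eq_0[OF assms] by fastforce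
  qed
  ultimately show ?thesis
    using norm_one_inverse[of w D] by (metis linorder_neq_iff one_less_inverse)
qed

lemma norm_one_least_gt_1_exists:
  fixes D :: nat
  assumes "\<not> is_square D"
  obtains e where "e \<in> norm_one (int D)" "e > 1" "\<And>w. w \<in> norm_one (int D) \<Longrightarrow> w > 1 \<Longrightarrow> e \<le> w"
proof -
  \<comment> \<open>Units above 1 have positive coordinates, so the one with the least \<open>y\<close> is the least.\<close>
  define P where "P = (\<lambda>y::nat. \<exists>x::int. x > 0 \<and> y > 0 \<and> x^2 - int D * (int y)^2 = 1)"
  have coeffs: "x > 0 \<and> y > 0 \<and> P (nat y)"
    if "x^2 - int D * y^2 = 1" "of_int x + of_int y * sqrt (real D) > 1" for x y
    using norm_one_gt_1_coeffs_pos[OF that] that unfolding P_def by auto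
  obtain z where "z \<in> norm_one (int D)" "z > 1" using norm_one_gt_1_exists[OF assms] by blast
  then have "\<exists>y. P y" using coeffs unfolding mem_norm_one_iff by blast
  then obtain x0 where x0: "x0 > 0" "x0^2 - int D * (int (Least P))^2 = 1" "Least P > 0"
    using LeastI_ex[of P] unfolding P_def by blast
  define e where "e = of_int x0 + real (Least P) * sqrt (real D)"
  show thesis
  proof
    show "e \<in> norm_one (int D)"
      unfolding e_def mem_norm_one_iff using x0 by (intro exI[of _ x0] exI[of _ "int (Least P)"]) simp
    have "sqrt (real D) \<ge> 1" using not_is_square_pos[OF assms] by simp
    then show "e > 1" unfolding e_def using x0 mult_mono[of 1 "real (Least P)" 1 "sqrt (real D)"]
      by simp
    fix w assume "w \<in> norm_one (int D)" "w > 1"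
    then obtain x y where xy: "x^2 - int D * y^2 = 1" "w = of_int x + of_int y * sqrt (real D)"
      unfolding mem_norm_one_iff by blast
    with \<open>w > 1\<close> have "x > 0" "y > 0" "Least P \<le> nat y" using coeffs Least_le by blast+
    then have "int (Least P) \<le> y" by linarith
    then have "x0^2 \<le> x^2"
      using x0 xy(1) mult_left_mono[OF power_mono[of "int (Least P)" y 2], of "int D"] by simp
    then have "x0 \<le> x" using \<open>x > 0\<close> by (simp add: abs_le_square_iff[symmetric])
    with \<open>int (Least P) \<le> y\<close> show "e \<le> w"
      unfolding e_def xy(2) by (simp add: add_mono mult_right_mono)
  qed
qed

lemma power_int_bracket:
  fixes e z :: real
  assumes "e > 1" and "z > 0"
  obtains k :: int where "e powi k \<le> z" and "z < e powi (k + 1)"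
proof
  define k where "k = \<lfloor>ln z / ln e\<rfloor>"
  have "ln e > 0" using assms(1) by simp
  moreover have "of_int k \<le> ln z / ln e" "ln z / ln e < of_int k + 1"
    unfolding k_def by linarith+
  ultimately have "of_int k * ln e \<le> ln z" "ln z < of_int (k + 1) * ln e"
    by (simp_all add: field_simps)
  moreover have "e powi j = exp (of_int j * ln e)" for j
    using exp_power_int[of "ln e" j] assms(1) by simp
  ultimately show "e powi k \<le> z" "z < e powi (k + 1)"
    using assms(2) by (metis exp_le_cancel_iff exp_ln exp_less_cancel_iff)+
qed

lemma norm_one_pos_eq_power_int:
  fixes D :: nat
  assumes e_mem: "e \<in> norm_one (int D)" and e_gt: "e > 1"
    and e_min: "\<And>w. w \<in> norm_one (int D) \<Longrightarrow> w > 1 \<Longrightarrow> e \<le> w"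
    and z: "z \<in> norm_one (int D)" "z > 0"
  shows "\<exists>k. z = e powi k"
proof -
  obtain k where k: "e powi k \<le> z" "z < e powi (k + 1)"
    using power_int_bracket[OF e_gt z(2)] .
  have "e powi k > 0" using e_gt by simp
  define w where "w = z * inverse (e powi k)"
  have "w \<in> norm_one (int D)"
    unfolding w_def by (intro norm_one_mult norm_one_inverse norm_one_power_int z e_mem)
  moreover have "1 \<le> w" "w < e"
    using k \<open>e powi k > 0\<close> e_gt unfolding w_def
    by (simp_all add: field_simps power_int_add)
  ultimately have "w = 1" using e_min by fastforce
  then show ?thesis using \<open>e powi k > 0\<close> unfolding w_def by (auto simp: field_simps)
qed

lemma norm_one_eq_pm_power_int:
  fixes D :: nat
  assumes "\<not> is_square D"
    and e_mem: "e \<in> norm_one (int D)" and e_gt: "e > 1"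
    and e_min: "\<And>w. w \<in> norm_one (int D) \<Longrightarrow> w > 1 \<Longrightarrow> e \<le> w"
    and z: "z \<in> norm_one (int D)"
  shows "\<exists>k. z = e powi k \<or> z = - (e powi k)"
proof -
  have "z \<noteq> 0"
    using z sqrt_nonsquare_coeffs_eq_0[OF assms(1)] unfolding mem_norm_one_iff by fastforce
  then consider "z > 0" | "- z > 0" by linarith
  then show ?thesis
  proof cases
    case 1
    then show ?thesis using norm_one_pos_eq_power_int[OF e_mem e_gt e_min z] by blast
  next
    case 2
    then obtain k where "- z = e powi k"
      using norm_one_pos_eq_power_int[OF e_mem e_gt e_min norm_one_uminus[OF z]] by blast
    then show ?thesis by (metis minus_minus)
  qed
qed

lemma fund_unit_eq_least:
  fixes D :: nat
  assumes "\<not> is_square D"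
    and e_mem: "e \<in> norm_one (int D)" and e_gt: "e > 1"
    and e_min: "\<And>w. w \<in> norm_one (int D) \<Longrightarrow> w > 1 \<Longrightarrow> e \<le> w"
  shows "fund_unit (int D) = e"
  unfolding fund_unit_def
proof (rule the_equality)
  show "e > 1 \<and> e \<in> norm_one (int D) \<and>
      (\<forall>z\<in>norm_one (int D). \<exists>k. z = e powi k \<or> z = - (e powi k))"
    using norm_one_eq_pm_power_int[OF assms] e_mem e_gt by blast
next
  fix e' assume e': "e' > 1 \<and> e' \<in> norm_one (int D) \<and>
      (\<forall>z\<in>norm_one (int D). \<exists>k. z = e' powi k \<or> z = - (e' powi k))"
  then obtain j where "e = e' powi j \<or> e = - (e' powi j)" using e_mem by blast
  moreover have "e' powi j > 0" using e' by simp
  ultimately have j: "e = e' powi j" using e_gt by linarith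
  have "j \<ge> 1"
  proof (rule ccontr)
    assume "\<not> j \<ge> 1"
    then have "e' powi j \<le> e' powi 0" using e' by (intro power_int_increasing) auto
    then show False using e_gt unfolding j by simp
  qed
  then have "e' \<le> e" unfolding j using e' power_int_increasing[of 1 j e'] by simp
  with e_min[of e'] e' show "e' = e" by simp
qed

lemma fund_unit_gt_1:
  fixes D :: nat
  assumes "\<not> is_square D"
  shows "fund_unit (int D) > 1"
proof -
  obtain e where "e \<in> norm_one (int D)" "e > 1" "\<And>w. w \<in> norm_one (int D) \<Longrightarrow> w > 1 \<Longrightarrow> e \<le> w"
    using norm_one_least_gt_1_exists[OF assms] by blast
  then show ?thesis using fund_unit_eq_least[OF assms] by simp
qed

section \<open>Counting good approximations of \<open>sqrt (b / a)\<close>\<close>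

lemma card_le_if_separated:
  fixes \<phi> :: "'a \<Rightarrow> real"
  assumes "g > 0" and "X \<ge> 0" and range: "\<And>p. p \<in> T \<Longrightarrow> 0 \<le> \<phi> p \<and> \<phi> p \<le> X"
    and sep: "\<And>p q. p \<in> T \<Longrightarrow> q \<in> T \<Longrightarrow> p \<noteq> q \<Longrightarrow> g \<le> \<bar>\<phi> p - \<phi> q\<bar>"
  shows "real (card T) \<le> X / g + 1"
proof -
  define R where "R = \<lfloor>X / g\<rfloor>"
  have "inj_on (\<lambda>p. \<lfloor>\<phi> p / g\<rfloor>) T"
  proof (rule inj_onI, rule ccontr)
    fix p q assume pq: "p \<in> T" "q \<in> T" "\<lfloor>\<phi> p / g\<rfloor> = \<lfloor>\<phi> q / g\<rfloor>" "p \<noteq> q"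
    then have "\<bar>\<phi> p / g - \<phi> q / g\<bar> < 1" by linarith
    then have "g * \<bar>\<phi> p / g - \<phi> q / g\<bar> < g" using \<open>g > 0\<close> by simp
    moreover have "\<bar>\<phi> p - \<phi> q\<bar> = \<bar>g * (\<phi> p / g - \<phi> q / g)\<bar>"
      using \<open>g > 0\<close> by (simp add: right_diff_distrib)
    ultimately show False using sep[OF pq(1,2,4)] \<open>g > 0\<close> by (simp add: abs_mult)
  qed
  moreover have "\<lfloor>\<phi> p / g\<rfloor> \<in> {0..R}" if "p \<in> T" for p
    using range[OF that] \<open>g > 0\<close> unfolding R_def by (simp add: floor_mono divide_right_mono)
  then have "(\<lambda>p. \<lfloor>\<phi> p / g\<rfloor>) ` T \<subseteq> {0..R}" by blast
  ultimately have "card T \<le> card {0..R}" by (intro card_inj_on_le) auto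
  moreover have "R \<ge> 0" unfolding R_def using assms(1,2) by simp
  ultimately have "real (card T) \<le> real_of_int R + 1" by simp
  then show ?thesis unfolding R_def by linarith
qed

lemma finite_bounded_height: "finite {(u::int, v::int). real_of_int (max \<bar>u\<bar> \<bar>v\<bar>) \<le> B}"
proof (rule finite_subset)
  show "{(u::int, v::int). real_of_int (max \<bar>u\<bar> \<bar>v\<bar>) \<le> B}
      \<subseteq> {-\<lceil>B\<rceil>..\<lceil>B\<rceil>} \<times> {-\<lceil>B\<rceil>..\<lceil>B\<rceil>}"
  proof
    fix p assume "p \<in> {(u::int, v::int). real_of_int (max \<bar>u\<bar> \<bar>v\<bar>) \<le> B}"
    then obtain u v where p: "p = (u, v)" and "real_of_int (max \<bar>u\<bar> \<bar>v\<bar>) \<le> B" by blast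
    then have "max \<bar>u\<bar> \<bar>v\<bar> \<le> \<lceil>B\<rceil>" by (simp add: le_ceiling_iff)
    then show "p \<in> {-\<lceil>B\<rceil>..\<lceil>B\<rceil>} \<times> {-\<lceil>B\<rceil>..\<lceil>B\<rceil>}" by (simp add: p abs_le_iff)
  qed
qed simp

lemma delta_chi_eq_card:
  assumes "B > 0"
  shows "delta \<theta> B (1/2) (chi \<epsilon>) = card {(u::int, v::int). v \<ge> 1 \<and> coprime u v \<and>
           real_of_int (max \<bar>u\<bar> \<bar>v\<bar>) \<le> B \<and> \<bar>of_int u / of_int v - \<theta>\<bar> \<le> \<epsilon> / B^2}"
proof -
  define S where "S = {(u::int, v::int). v \<ge> 1 \<and> coprime u v \<and> real_of_int (max \<bar>u\<bar> \<bar>v\<bar>) \<le> B}"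
  define P where "P = (\<lambda>(u::int, v::int). \<bar>of_int u / of_int v - \<theta>\<bar> \<le> \<epsilon> / B^2)"
  have "finite S" unfolding S_def by (rule finite_subset[OF _ finite_bounded_height]) auto
  have "delta \<theta> B (1/2) (chi \<epsilon>) = (\<Sum>p\<in>S. if P p then 1 else 0)"
    unfolding delta_def S_def[symmetric] chi_def P_def using assms
    by (intro sum.cong) (auto simp: abs_mult pos_le_divide_eq mult.commute)
  also have "\<dots> = card {p \<in> S. P p}"
    using \<open>finite S\<close> by (simp flip: sum.inter_filter)
  finally show ?thesis unfolding S_def P_def by (simp add: case_prod_unfold)
qed

lemma approx_scaled_le:
  fixes u v :: int and \<theta> \<epsilon> B :: real
  assumes "B > 0" and "1 \<le> v" and "of_int v \<le> B" and "\<bar>of_int u / of_int v - \<theta>\<bar> \<le> \<epsilon> / B^2"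
  shows "\<bar>of_int u - \<theta> * of_int v\<bar> \<le> \<epsilon> / B"
proof -
  have "\<bar>of_int u - \<theta> * of_int v\<bar> = of_int v * \<bar>of_int u / of_int v - \<theta>\<bar>"
    using assms(2) by (simp add: abs_mult_pos' field_simps)
  also have "\<dots> \<le> B * (\<epsilon> / B^2)"
    using assms(2-4) by (intro mult_mono) auto
  also have "\<dots> = \<epsilon> / B" using assms(1) by (simp add: power2_eq_square)
  finally show ?thesis .
qed

lemma int_quadratic_form_nonzero:
  fixes a b :: nat and x y :: int
  assumes "a > 0" and "sqrt (real b / real a) \<notin> \<rat>" and "y \<noteq> 0"
  shows "int a * x^2 \<noteq> int b * y^2"
proof
  assume "int a * x^2 = int b * y^2"
  then have "real a * (of_int \<bar>x\<bar>)^2 = real b * (of_int \<bar>y\<bar>)^2"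
    by (metis of_int_mult of_int_of_nat_eq of_int_power power2_abs)
  then have "real b / real a = (of_int \<bar>x\<bar> / of_int \<bar>y\<bar>)^2"
    using assms(1,3) by (simp add: field_simps power_divide)
  then have "sqrt (real b / real a) = of_int \<bar>x\<bar> / of_int \<bar>y\<bar>" by simp
  then show False using assms(2) by simp
qed

lemma approx_points_separated:
  fixes a b :: nat and u1 v1 u2 v2 :: int and t :: real
  defines "\<theta> \<equiv> sqrt (real b / real a)"
  assumes "a > 0" and "\<theta> \<notin> \<rat>"
    and close1: "\<bar>of_int u1 - \<theta> * of_int v1\<bar> \<le> t" and close2: "\<bar>of_int u2 - \<theta> * of_int v2\<bar> \<le> t"
    and "(u1, v1) \<noteq> (u2, v2)" and "t < 1/2" and "4 * a * t \<le> 1"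
  shows "1 \<le> 8 * sqrt (real (a * b)) * t * \<bar>of_int v1 - of_int v2\<bar>"
proof -
  define du where "du = u1 - u2"
  define dv where "dv = v1 - v2"
  have a_theta: "real a * \<theta> * \<theta> = real b" "real a * \<theta> = sqrt (real (a * b))"
    using \<open>a > 0\<close> unfolding \<theta>_def by (simp_all add: real_sqrt_mult real_sqrt_divide field_simps)
  have diff: "\<bar>of_int du - \<theta> * of_int dv\<bar> \<le> 2 * t"
    using close1 close2 unfolding du_def dv_def by (simp add: algebra_simps)
  then have "0 \<le> t" by linarith
  have "dv \<noteq> 0"
  proof
    assume "dv = 0"
    then have "du = 0" using diff \<open>t < 1/2\<close> by simp
    with \<open>dv = 0\<close> show False using assms(6) unfolding du_def dv_def by simp
  qed
  have "\<bar>of_int du + \<theta> * of_int dv\<bar> \<le> \<bar>of_int du - \<theta> * of_int dv\<bar> + \<bar>2 * \<theta> * of_int dv\<bar>"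
    using abs_triangle_ineq[of "of_int du - \<theta> * of_int dv" "2 * \<theta> * of_int dv"] by simp
  then have sum: "\<bar>of_int du + \<theta> * of_int dv\<bar> \<le> 2 * t + 2 * \<theta> * \<bar>of_int dv\<bar>"
    using diff by (simp add: abs_mult \<theta>_def)
  from \<open>dv \<noteq> 0\<close> have "int a * du^2 - int b * dv^2 \<noteq> 0"
    using int_quadratic_form_nonzero assms(2,3) unfolding \<theta>_def by simp
  then have "1 \<le> \<bar>real_of_int (int a * du^2 - int b * dv^2)\<bar>" by linarith
  also have "real_of_int (int a * du^2 - int b * dv^2)
      = real a * (of_int du - \<theta> * of_int dv) * (of_int du + \<theta> * of_int dv)"
    using a_theta(1)[symmetric] by (simp add: algebra_simps power2_eq_square)
  also have "\<bar>\<dots>\<bar> \<le> real a * (2 * t) * (2 * t + 2 * \<theta> * \<bar>of_int dv\<bar>)"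
    unfolding abs_mult using diff sum \<open>a > 0\<close> by (intro mult_mono mult_left_mono) auto
  also have "\<dots> = (4 * a * t) * t + 4 * (real a * \<theta>) * t * \<bar>of_int dv\<bar>"
    by (simp add: algebra_simps)
  also have "\<dots> \<le> 1/2 + 4 * sqrt (real (a * b)) * t * \<bar>of_int dv\<bar>"
    using mult_right_mono[OF assms(8), of t] assms(7) \<open>0 \<le> t\<close> unfolding a_theta(2) by linarith
  finally show ?thesis unfolding dv_def by simp
qed

lemma delta_chi_le:
  fixes a b :: nat and \<epsilon> B :: real
  assumes "a > 0" and irrat: "sqrt (real b / real a) \<notin> \<rat>" and "\<epsilon> > 0"
    and "B \<ge> 1 + 2 * \<epsilon> + 4 * \<epsilon> * a"
  shows "delta (sqrt (real b / real a)) B (1/2) (chi \<epsilon>) \<le> 8 * \<epsilon> * sqrt (real (a * b)) + 1"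
proof -
  define \<theta> where "\<theta> = sqrt (real b / real a)"
  define s where "s = sqrt (real (a * b))"
  define t where "t = \<epsilon> / B"
  define T where "T = {(u::int, v::int). v \<ge> 1 \<and> coprime u v \<and>
           real_of_int (max \<bar>u\<bar> \<bar>v\<bar>) \<le> B \<and> \<bar>of_int u / of_int v - \<theta>\<bar> \<le> \<epsilon> / B^2}"
  have "0 \<le> 4 * \<epsilon> * a" using assms(3) by simp
  then have "B > 0" "2 * \<epsilon> < B" "4 * \<epsilon> * a \<le> B" using assms(3,4) by linarith+
  then have t: "t < 1/2" "4 * a * t \<le> 1" unfolding t_def using assms(3,4) by (simp_all add: field_simps)
  have "b \<noteq> 0" using irrat by (metis Rats_0 div_0 of_nat_0 real_sqrt_zero)
  then have "s > 0" unfolding s_def using assms(1) by simp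
  have close: "1 \<le> v \<and> of_int v \<le> B \<and> \<bar>of_int u - \<theta> * of_int v\<bar> \<le> t" if "(u, v) \<in> T" for u v
    using that approx_scaled_le[OF \<open>B > 0\<close>, of v u \<theta> \<epsilon>] unfolding T_def t_def by auto
  have "real (card T) \<le> B / (B / (8 * \<epsilon> * s)) + 1"
  proof (rule card_le_if_separated[where \<phi> = "\<lambda>p. real_of_int (snd p)"])
    show "B / (8 * \<epsilon> * s) > 0" "B \<ge> 0" using \<open>B > 0\<close> \<open>s > 0\<close> assms(3) by simp_all
    show "0 \<le> real_of_int (snd p) \<and> real_of_int (snd p) \<le> B" if "p \<in> T" for p
      using close[of "fst p" "snd p"] that by simp
    fix p q assume "p \<in> T" "q \<in> T" "p \<noteq> q"
    moreover obtain u1 v1 u2 v2 where pq: "p = (u1, v1)" "q = (u2, v2)" by fastforce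
    ultimately have "\<bar>of_int u1 - \<theta> * of_int v1\<bar> \<le> t" "\<bar>of_int u2 - \<theta> * of_int v2\<bar> \<le> t"
      "(u1, v1) \<noteq> (u2, v2)"
      using close by blast+
    from approx_points_separated[OF assms(1) irrat this[unfolded \<theta>_def] t]
    have "1 \<le> 8 * s * t * \<bar>of_int (snd p) - of_int (snd q)\<bar>" unfolding pq s_def by simp
    then show "B / (8 * \<epsilon> * s) \<le> \<bar>of_int (snd p) - of_int (snd q)\<bar>"
      using \<open>B > 0\<close> \<open>s > 0\<close> assms(3) unfolding t_def by (simp add: field_simps)
  qed
  also have "\<dots> = 8 * \<epsilon> * s + 1" using \<open>B > 0\<close> \<open>s > 0\<close> assms(3) by simp
  finally show ?thesis using delta_chi_eq_card[OF \<open>B > 0\<close>] unfolding T_def \<theta>_def s_def by simp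
qed

lemma not_is_square_mult_parts:
  fixes a b A' B' a' b' :: nat
  assumes "coprime a b" and "\<not> (is_square a \<and> is_square b)"
    and "a = A' * a'^2" and "b = B' * b'^2"
  shows "\<not> is_square (A' * B')"
proof
  assume "is_square (A' * B')"
  then obtain s where "A' * B' = s^2" by (elim is_nth_powerE)
  then have "a * b = (s * a' * b')^2"
    using assms(3,4) by (simp add: power_mult_distrib algebra_simps)
  then have "is_square (a * b)" by simp
  then show False using assms(2) is_nth_power_mult_coprime_nat_iff[OF assms(1)] by blast
qed

lemma badly_approximable_not_rat:
  fixes \<theta> \<Xi> :: real
  assumes "\<Xi> > 0" and "\<forall>(u::int) (v::nat). v \<ge> 1 \<longrightarrow> \<bar>of_int u / real v - \<theta>\<bar> \<ge> \<Xi> / (real v)^2"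
  shows "\<theta> \<notin> \<rat>"
proof
  assume "\<theta> \<in> \<rat>"
  then obtain p q :: int where "q > 0" and "\<theta> = of_int p / of_int q" by (elim Rats_cases')
  then have "\<bar>of_int p / real (nat q) - \<theta>\<bar> = 0" "nat q \<ge> 1" by simp_all
  moreover have "\<Xi> / (real (nat q))^2 > 0" using \<open>\<Xi> > 0\<close> \<open>q > 0\<close> by simp
  ultimately show False using assms(2)[rule_format, of "nat q" p] by linarith
qed

lemma num_divisors_ge_1: "n > 0 \<Longrightarrow> 1 \<le> num_divisors n"
  unfolding num_divisors_def
  by (metis One_nat_def Suc_leI card_gt_0_iff dvd_1_left empty_iff finite_divisors_nat mem_Collect_eq)

lemma sum_ge_floor_if_ge_1:
  fixes w :: "int \<Rightarrow> real" and c :: real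
  assumes "c \<ge> 0" and w: "\<And>m. m \<noteq> 0 \<Longrightarrow> 1 \<le> w m"
  shows "of_int \<lfloor>c\<rfloor> + 1 \<le> (\<Sum>m\<in>{m. m \<noteq> 0 \<and> of_int \<bar>m\<bar> \<le> c + 1}. w m)"
proof -
  define L where "L = \<lfloor>c\<rfloor> + 1"
  define M where "M = {m::int. m \<noteq> 0 \<and> \<bar>m\<bar> \<le> L}"
  have "of_int \<bar>m\<bar> \<le> c + 1 \<longleftrightarrow> \<bar>m\<bar> \<le> L" for m unfolding L_def by linarith
  then have M_eq: "{m. m \<noteq> 0 \<and> of_int \<bar>m\<bar> \<le> c + 1} = M" unfolding M_def by simp
  have "finite M" unfolding M_def by (rule finite_subset[of _ "{-L..L}"]) auto
  have "{1..L} \<subseteq> M" unfolding M_def by auto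
  have "of_int L = (\<Sum>m\<in>{1..L}. 1::real)" using assms(1) unfolding L_def by simp
  also have "\<dots> \<le> (\<Sum>m\<in>{1..L}. w m)" by (rule sum_mono) (simp add: w)
  also have "\<dots> \<le> (\<Sum>m\<in>M. w m)"
  proof (rule sum_mono2[OF \<open>finite M\<close> \<open>{1..L} \<subseteq> M\<close>])
    fix m assume "m \<in> M - {1..L}"
    then have "m \<noteq> 0" unfolding M_def by simp
    then show "0 \<le> w m" using w[of m] by simp
  qed
  finally show ?thesis unfolding M_eq L_def by simp
qed

lemma divisor_weight_sum_ge_floor:
  fixes A' :: nat and K :: int and x :: real
  assumes "A' > 0" and "K \<ge> 0" and "x \<ge> 0"
  shows "of_int \<lfloor>x\<rfloor> + 1 \<le> (\<Sum>m\<in>{m. m \<noteq> 0 \<and> of_int \<bar>m\<bar> \<le> x + 1}.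
           real (num_divisors (A' * nat \<bar>m\<bar>)) * real_of_int (K + 1))"
proof (rule sum_ge_floor_if_ge_1[OF assms(3)])
  fix m :: int assume "m \<noteq> 0"
  then have "1 \<le> real (num_divisors (A' * nat \<bar>m\<bar>))"
    using num_divisors_ge_1[of "A' * nat \<bar>m\<bar>"] assms(1) by simp
  moreover have "1 \<le> real_of_int (K + 1)" using assms(2) by simp
  ultimately show "1 \<le> real (num_divisors (A' * nat \<bar>m\<bar>)) * real_of_int (K + 1)"
    using mult_mono[of 1 _ 1 "real_of_int (K + 1)"] by simp
qed

theorem mainTheorem9:
  fixes a b A' B' a' b' :: nat and \<Xi> :: real
  assumes "0 < a" and "a < b" and "coprime a b"
    and "\<not> ((\<exists>x. a = x^2) \<and> (\<exists>y. b = y^2))"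
    and "a = A' * a'^2" and "squarefree A'"
    and "b = B' * b'^2" and "squarefree B'"
    and "\<Xi> > 0"
    and "\<forall>(u::int) (v::nat). v \<ge> 1 \<longrightarrow>
           \<bar>real_of_int u / real v - sqrt (real b / real a)\<bar> \<ge> \<Xi> / (real v)^2"
  shows "\<forall>\<epsilon>::real. \<epsilon> > \<Xi> \<longrightarrow> (\<exists>B0::real. \<forall>B\<ge>B0.
           delta (sqrt (real b / real a)) B (1/2) (chi \<epsilon>)
           \<le> 6 * (\<Sum>m\<in>{m::int. m \<noteq> 0 \<and> real_of_int \<bar>m\<bar> \<le> 2 * \<epsilon> * sqrt (real (a * b)) + 1}.
                  real (num_divisors (A' * nat \<bar>m\<bar>)) *
                  real_of_int (\<lfloor>(ln \<epsilon> - ln \<Xi>) / (2 * ln (fund_unit (int (A' * B'))))\<rfloor> + 1)))"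
proof (intro allI impI)
  fix \<epsilon> :: real assume "\<epsilon> > \<Xi>"
  then have "\<epsilon> > 0" using assms(9) by linarith
  define x where "x = 2 * \<epsilon> * sqrt (real (a * b))"
  define K where "K = \<lfloor>(ln \<epsilon> - ln \<Xi>) / (2 * ln (fund_unit (int (A' * B'))))\<rfloor>"
  have "\<not> is_square (A' * B')"
    using not_is_square_mult_parts[OF assms(3) _ assms(5,7)] assms(4) by (auto simp: is_nth_power_def)
  then have "ln (fund_unit (int (A' * B'))) > 0" by (intro ln_gt_zero fund_unit_gt_1)
  then have "K \<ge> 0" using \<open>\<epsilon> > \<Xi>\<close> assms(9) unfolding K_def by simp
  moreover have "A' > 0" using assms(1,5) by (cases "A' = 0") simp_all
  ultimately have rhs: "of_int \<lfloor>x\<rfloor> + 1 \<le> (\<Sum>m\<in>{m. m \<noteq> 0 \<and> of_int \<bar>m\<bar> \<le> x + 1}.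
      real (num_divisors (A' * nat \<bar>m\<bar>)) * real_of_int (K + 1))"
    using \<open>\<epsilon> > 0\<close> unfolding x_def by (intro divisor_weight_sum_ge_floor) auto
  \<comment> \<open>The Diophantine hypothesis only serves to make \<open>sqrt (b / a)\<close> irrational.\<close>
  have "delta (sqrt (real b / real a)) B (1/2) (chi \<epsilon>) \<le> 6 * (\<Sum>m\<in>{m. m \<noteq> 0 \<and> of_int \<bar>m\<bar> \<le> x + 1}.
      real (num_divisors (A' * nat \<bar>m\<bar>)) * real_of_int (K + 1))"
    if "B \<ge> 1 + 2 * \<epsilon> + 4 * \<epsilon> * a" for B
  proof -
    have "delta (sqrt (real b / real a)) B (1/2) (chi \<epsilon>) \<le> 4 * x + 1"
      using delta_chi_le[OF assms(1) badly_approximable_not_rat[OF assms(9,10)] \<open>\<epsilon> > 0\<close> that]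
      unfolding x_def by simp
    moreover have "0 \<le> \<lfloor>x\<rfloor>" using \<open>\<epsilon> > 0\<close> unfolding x_def by simp
    ultimately show ?thesis using rhs by linarith
  qed
  then show "\<exists>B0. \<forall>B\<ge>B0. delta (sqrt (real b / real a)) B (1/2) (chi \<epsilon>)
      \<le> 6 * (\<Sum>m\<in>{m. m \<noteq> 0 \<and> real_of_int \<bar>m\<bar> \<le> 2 * \<epsilon> * sqrt (real (a * b)) + 1}.
          real (num_divisors (A' * nat \<bar>m\<bar>)) *
          real_of_int (\<lfloor>(ln \<epsilon> - ln \<Xi>) / (2 * ln (fund_unit (int (A' * B'))))\<rfloor> + 1))"
    unfolding x_def K_def by blast
qed

end
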